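(* Let $(\mathcal Q,d)$ be a separable Hadamard space, $Y$ a $\mathcal Q$-valued random variable, $o\in\mathcal Q$, and $\tau\in\mathcal S_0^+$ with $\mathbb E[\tau'(d(Y,o))]<\infty$. Assume the support of (the distribution of) $Y$ is convex. Then the $\tau$-Fréchet mean of $Y$, i.e. the minimizer of $q\mapsto\mathbb E[\tau(d(Y,q))-\tau(d(Y,o))]$, is unique.
   Context: A Hadamard space is a complete metric space $(\mathcal Q,d)$ such that for all $y_0,y_1$ there is $m$ with $\frac12 d(y_0,q)^2+\frac12 d(y_1,q)^2-\frac14 d(y_0,y_1)^2\ge d(q,m)^2$ for all $q$; any two distinct points are joined by a unique geodesic, and a set is convex if it contains the geodesic between any two of its points. The support of $Y$ is the smallest closed set $C$ with $\mathbb P(Y\in C)=1$. $\mathcal S_0^+$ is the set of nondecreasing convex $\tau:[0,\infty)\to\mathbb R$, differentiable on $(0,\infty)$ with concave derivative $\tau'$ (with $\tau'(0):=\lim_{x\searrow0}\tau'(x)$), such that $\tau(0)=0$ and $\tau'(x)>0$ for $x>0$. *)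

theory Defs
  imports "HOL-Probability.Probability"
begin

text \<open>Hadamard space condition (completeness is imposed via the type class complete_space).\<close>
definition hadamard_space :: "'a::metric_space itself \<Rightarrow> bool" where
  "hadamard_space _ \<longleftrightarrow>
     (\<forall>y0 y1::'a. \<exists>m. \<forall>q.
        (1/2) * (dist y0 q)^2 + (1/2) * (dist y1 q)^2 - (1/4) * (dist y0 y1)^2 \<ge> (dist q m)^2)"

definition separable_space :: "'a::metric_space itself \<Rightarrow> bool" where
  "separable_space _ \<longleftrightarrow> (\<exists>D::'a set. countable D \<and> closure D = UNIV)"

definition geodesic_between :: "(real \<Rightarrow> 'a::metric_space) \<Rightarrow> 'a \<Rightarrow> 'a \<Rightarrow> bool" where
  "geodesic_between g x y \<longleftrightarrow> g 0 = x \<and> g 1 = y \<and>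
     (\<forall>s\<in>{0..1}. \<forall>t\<in>{0..1}. dist (g s) (g t) = \<bar>s - t\<bar> * dist x y)"

definition geodesically_convex :: "'a::metric_space set \<Rightarrow> bool" where
  "geodesically_convex C \<longleftrightarrow>
     (\<forall>x\<in>C. \<forall>y\<in>C. \<forall>g. geodesic_between g x y \<longrightarrow> g ` {0..1} \<subseteq> C)"

text \<open>Support of a random variable Y: the intersection of all closed sets of full probability
  (the smallest closed set of full probability, in separable spaces).\<close>
definition rv_support :: "'b measure \<Rightarrow> ('b \<Rightarrow> 'a::metric_space) \<Rightarrow> 'a set" where
  "rv_support M Y = \<Inter>{C. closed C \<and> measure M {\<omega>\<in>space M. Y \<omega> \<in> C} = 1}"

definition tau_deriv :: "(real \<Rightarrow> real) \<Rightarrow> real \<Rightarrow> real" where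
  "tau_deriv \<tau> x = (if x > 0 then deriv \<tau> x else Lim (at_right 0) (deriv \<tau>))"

definition S0plus :: "(real \<Rightarrow> real) set" where
  "S0plus = {\<tau>. mono_on {0..} \<tau> \<and> convex_on {0..} \<tau> \<and>
      (\<forall>x>0. \<tau> differentiable at x) \<and> concave_on {0<..} (deriv \<tau>) \<and>
      (\<exists>l. (deriv \<tau> \<longlongrightarrow> l) (at_right 0)) \<and>
      \<tau> 0 = 0 \<and> (\<forall>x>0. deriv \<tau> x > 0)}"

definition frechet_obj :: "'b measure \<Rightarrow> ('b \<Rightarrow> 'a::metric_space) \<Rightarrow> (real \<Rightarrow> real) \<Rightarrow> 'a \<Rightarrow> 'a \<Rightarrow> real" where
  "frechet_obj M Y \<tau> o' q = (\<integral>\<omega>. \<tau> (dist (Y \<omega>) q) - \<tau> (dist (Y \<omega>) o') \<partial>M)"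

definition is_tau_frechet_mean :: "'b measure \<Rightarrow> ('b \<Rightarrow> 'a::metric_space) \<Rightarrow> (real \<Rightarrow> real) \<Rightarrow> 'a \<Rightarrow> 'a \<Rightarrow> bool" where
  "is_tau_frechet_mean M Y \<tau> o' m \<longleftrightarrow> (\<forall>q. frechet_obj M Y \<tau> o' m \<le> frechet_obj M Y \<tau> o' q)"

end

theory Submission
  imports Defs
begin

text \<open>
  Let \<open>m\<^sub>1 \<noteq> m\<^sub>2\<close> be two \<open>\<tau>\<close>-Frechet means and \<open>m\<close> the midpoint given by the Hadamard
  inequality. That inequality yields \<open>d(y,m) \<le> (d(y,m\<^sub>1) + d(y,m\<^sub>2))/2\<close>, strictly unless
  \<open>|d(y,m\<^sub>1) - d(y,m\<^sub>2)| = d(m\<^sub>1,m\<^sub>2)\<close>; since \<open>\<tau>\<close> is convex and strictly increasing, \<open>m\<close> is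
  at least as good as \<open>m\<^sub>1\<close> and \<open>m\<^sub>2\<close>, and the comparison is strict unless almost surely
  \<open>Y\<close> lies in the closed set where \<open>|d(Y,m\<^sub>1) - d(Y,m\<^sub>2)| \<ge> d(m\<^sub>1,m\<^sub>2)\<close>. So the support lies
  in that set. Minimality of each \<open>m\<^sub>i\<close> forces the support to contain points strictly closer
  to \<open>m\<^sub>1\<close> and points strictly closer to \<open>m\<^sub>2\<close>. But the support is geodesically convex,
  hence connected (geodesics exist in complete midpoint spaces), so it also contains a point
  equidistant from \<open>m\<^sub>1\<close> and \<open>m\<^sub>2\<close>: a contradiction.
  Integrability of the objective comes from \<open>\<tau>'(2x) \<le> 3 \<tau>'(x)\<close>, a consequence of the
  concavity of \<open>\<tau>'\<close>.
\<close>

section \<open>Midpoints and geodesics\<close>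

definition has_midpoints :: "'a::metric_space itself \<Rightarrow> bool" where
  "has_midpoints _ \<longleftrightarrow> (\<forall>x y::'a. \<exists>m. dist x m \<le> dist x y / 2 \<and> dist y m \<le> dist x y / 2)"

lemma hadamard_space_midpoint:
  fixes x0 x1 :: "'a::metric_space"
  assumes "hadamard_space TYPE('a)"
  obtains m where "\<And>y. dist y m \<le> (dist y x0 + dist y x1) / 2"
    and "\<And>y. \<bar>dist y x0 - dist y x1\<bar> < dist x0 x1 \<Longrightarrow> dist y m < (dist y x0 + dist y x1) / 2"
proof -
  obtain m where m: "\<And>q. (dist q m)\<^sup>2 \<le> (1/2) * (dist x0 q)\<^sup>2 + (1/2) * (dist x1 q)\<^sup>2 - (1/4) * (dist x0 x1)\<^sup>2"
    using assms unfolding hadamard_space_def by blast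
  have sq: "(dist y m)\<^sup>2 \<le> ((dist y x0 + dist y x1) / 2)\<^sup>2 - ((dist x0 x1)\<^sup>2 - (dist y x0 - dist y x1)\<^sup>2) / 4"
    for y using m[of y] by (simp add: dist_commute power2_eq_square field_simps)
  have tri: "\<bar>dist y x0 - dist y x1\<bar> \<le> dist x0 x1" for y
    using dist_triangle[of x0 y x1] dist_triangle[of x1 y x0] by (simp add: dist_commute abs_le_iff)
  have le: "dist y m \<le> (dist y x0 + dist y x1) / 2" for y
  proof (rule power2_le_imp_le)
    have "(dist y x0 - dist y x1)\<^sup>2 \<le> (dist x0 x1)\<^sup>2"
      using tri[of y] by (metis abs_ge_zero power2_abs power_mono)
    then show "(dist y m)\<^sup>2 \<le> ((dist y x0 + dist y x1) / 2)\<^sup>2" using sq[of y] by argo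
  qed simp
  have less: "dist y m < (dist y x0 + dist y x1) / 2"
    if "\<bar>dist y x0 - dist y x1\<bar> < dist x0 x1" for y
  proof (rule power_less_imp_less_base)
    have "(dist y x0 - dist y x1)\<^sup>2 < (dist x0 x1)\<^sup>2"
      using that by (metis abs_ge_zero power2_abs power_strict_mono zero_less_numeral)
    then show "(dist y m)\<^sup>2 < ((dist y x0 + dist y x1) / 2)\<^sup>2" using sq[of y] by argo
  qed simp
  show thesis by (rule that[OF le less])
qed

lemma hadamard_space_has_midpoints:
  assumes "hadamard_space TYPE('a::metric_space)"
  shows "has_midpoints TYPE('a)"
  unfolding has_midpoints_def
proof (intro allI)
  fix x y :: 'a
  obtain m where "\<And>z. dist z m \<le> (dist z x + dist z y) / 2"
    using hadamard_space_midpoint[OF assms] by metis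
  from this[of x] this[of y] show "\<exists>m. dist x m \<le> dist x y / 2 \<and> dist y m \<le> dist x y / 2"
    by (auto simp: dist_commute)
qed

definition metric_midpoint :: "'a::metric_space \<Rightarrow> 'a \<Rightarrow> 'a" where
  "metric_midpoint x y = (SOME m. dist x m \<le> dist x y / 2 \<and> dist y m \<le> dist x y / 2)"

lemma metric_midpoint_dist:
  fixes x y :: "'a::metric_space"
  assumes "has_midpoints TYPE('a)"
  shows "dist x (metric_midpoint x y) \<le> dist x y / 2" "dist (metric_midpoint x y) y \<le> dist x y / 2"
proof -
  have "\<exists>m. dist x m \<le> dist x y / 2 \<and> dist y m \<le> dist x y / 2"
    using assms unfolding has_midpoints_def by blast
  from someI_ex[OF this] show "dist x (metric_midpoint x y) \<le> dist x y / 2"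
    "dist (metric_midpoint x y) y \<le> dist x y / 2"
    unfolding metric_midpoint_def by (auto simp: dist_commute)
qed

text \<open>\<open>dyadic_point x y n k\<close> stands for the point with parameter \<open>k / 2\<^sup>n\<close> on a geodesic
  from \<open>x\<close> to \<open>y\<close>; refining \<open>n\<close> inserts midpoints between consecutive points.\<close>

fun dyadic_point :: "'a::metric_space \<Rightarrow> 'a \<Rightarrow> nat \<Rightarrow> nat \<Rightarrow> 'a" where
  "dyadic_point x y 0 k = (if k = 0 then x else y)"
| "dyadic_point x y (Suc n) k = (if even k then dyadic_point x y n (k div 2)
      else metric_midpoint (dyadic_point x y n (k div 2)) (dyadic_point x y n (k div 2 + 1)))"

lemma dyadic_point_refine: "dyadic_point x y (n + j) (k * 2^j) = dyadic_point x y n k"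
  by (induction j) (auto simp: mult.assoc[symmetric])

lemma dyadic_point_dist_Suc:
  fixes x y :: "'a::metric_space"
  assumes H: "has_midpoints TYPE('a)"
  shows "k < 2^n \<Longrightarrow> dist (dyadic_point x y n k) (dyadic_point x y n (Suc k)) \<le> dist x y / 2^n"
proof (induction n arbitrary: k)
  case 0
  then show ?case by simp
next
  case (Suc n)
  define j where "j = k div 2"
  have j: "j < 2^n" using Suc.prems unfolding j_def by simp
  let ?p = "dyadic_point x y n j" and ?q = "dyadic_point x y n (Suc j)"
  have "dist (dyadic_point x y (Suc n) k) (dyadic_point x y (Suc n) (Suc k)) \<le> dist ?p ?q / 2"
  proof (cases "even k")
    case True
    then have "Suc k div 2 = j" unfolding j_def by presburger
    then show ?thesis using True metric_midpoint_dist(1)[OF H, of ?p ?q] by (simp add: j_def)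
  next
    case False
    then have "Suc k div 2 = Suc j" unfolding j_def by presburger
    then show ?thesis using False metric_midpoint_dist(2)[OF H, of ?p ?q] by (simp add: j_def)
  qed
  also have "\<dots> \<le> dist x y / 2^Suc n" using Suc.IH[OF j] by simp
  finally show ?case .
qed

lemma dyadic_point_dist_le:
  fixes x y :: "'a::metric_space"
  assumes H: "has_midpoints TYPE('a)"
  shows "i \<le> j \<Longrightarrow> j \<le> 2^n \<Longrightarrow> dist (dyadic_point x y n i) (dyadic_point x y n j) \<le> real (j - i) * dist x y / 2^n"
proof (induction j)
  case 0
  then show ?case by simp
next
  case (Suc j)
  show ?case
  proof (cases "i = Suc j")
    case False
    then have ij: "i \<le> j" using Suc.prems by simp
    have "dist (dyadic_point x y n i) (dyadic_point x y n (Suc j))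
        \<le> dist (dyadic_point x y n i) (dyadic_point x y n j) + dist (dyadic_point x y n j) (dyadic_point x y n (Suc j))"
      by (rule dist_triangle)
    also have "\<dots> \<le> real (j - i) * dist x y / 2^n + dist x y / 2^n"
      using Suc.IH[OF ij] Suc.prems dyadic_point_dist_Suc[OF H, of j n x y] by (intro add_mono) auto
    also have "\<dots> = real (Suc j - i) * dist x y / 2^n"
      using ij by (simp add: of_nat_diff Suc_diff_le field_simps)
    finally show ?thesis .
  qed simp
qed

lemma dyadic_point_dist:
  fixes x y :: "'a::metric_space"
  assumes H: "has_midpoints TYPE('a)" and "m \<le> 2^k" "m' \<le> 2^k'"
  shows "dist (dyadic_point x y k m) (dyadic_point x y k' m') \<le> \<bar>real m / 2^k - real m' / 2^k'\<bar> * dist x y"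
proof -
  define N a b where "N = k + k'" and "a = m * 2^k'" and "b = m' * 2^k"
  have "dyadic_point x y k m = dyadic_point x y N a" "dyadic_point x y k' m' = dyadic_point x y N b"
    unfolding N_def a_def b_def using dyadic_point_refine[of x y k' k m'] by (simp_all add: dyadic_point_refine add.commute)
  moreover have "a \<le> 2^N" "b \<le> 2^N" unfolding a_def b_def N_def using assms(2,3) by (simp_all add: power_add)
  moreover have "\<bar>real m / 2^k - real m' / 2^k'\<bar> = \<bar>real a - real b\<bar> / 2^N"
    unfolding a_def b_def N_def by (simp add: power_add field_simps)
  moreover have "dist (dyadic_point x y N a) (dyadic_point x y N b) \<le> \<bar>real a - real b\<bar> * dist x y / 2^N"
    if "a \<le> 2^N" "b \<le> 2^N"
    using dyadic_point_dist_le[OF H, of a b N x y] dyadic_point_dist_le[OF H, of b a N x y] that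
    by (cases "a \<le> b") (auto simp: of_nat_diff dist_commute)
  ultimately show ?thesis by simp
qed

definition dyadics01 :: "real set" where
  "dyadics01 = {real m / 2^k | m k. m \<le> (2::nat)^k}"

lemma closure_dyadics01: "closure dyadics01 = {0..1}"
proof -
  have "dyadics01 = {0..1} \<inter> (\<Union>k m. {of_nat m / 2^k})"
  proof (intro set_eqI iffI)
    fix t :: real assume "t \<in> dyadics01"
    then obtain k m where "m \<le> (2::nat)^k" "t = real m / 2^k" unfolding dyadics01_def by blast
    moreover from this(1) have "real m \<le> 2^k" by (metis of_nat_le_iff of_nat_numeral of_nat_power)
    ultimately show "t \<in> {0..1} \<inter> (\<Union>k m. {of_nat m / 2^k})" by auto
  next
    fix t :: real assume "t \<in> {0..1} \<inter> (\<Union>k m. {of_nat m / 2^k})"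
    then obtain k m where t: "t = real m / 2^k" "t \<le> 1" by auto
    then have "real m \<le> 2^k" by (simp add: divide_le_eq)
    then have "m \<le> 2^k" by (metis of_nat_le_iff of_nat_numeral of_nat_power)
    then show "t \<in> dyadics01" unfolding dyadics01_def using t by blast
  qed
  moreover have "closure ({0..1::real} \<inter> (\<Union>k m. {of_nat m / 2^k})) = closure {0..1}"
    by (rule closure_dyadic_rationals_in_convex_set_pos_1) auto
  ultimately show ?thesis by simp
qed

definition dyadic_path :: "'a::metric_space \<Rightarrow> 'a \<Rightarrow> real \<Rightarrow> 'a" where
  "dyadic_path x y t = (SOME p. \<exists>k m. m \<le> (2::nat)^k \<and> t = real m / 2^k \<and> p = dyadic_point x y k m)"

lemma dyadic_path_eq:
  fixes x y :: "'a::metric_space"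
  assumes H: "has_midpoints TYPE('a)" and "m \<le> 2^k"
  shows "dyadic_path x y (real m / 2^k) = dyadic_point x y k m"
proof -
  have "\<exists>p. \<exists>k' m'. m' \<le> (2::nat)^k' \<and> real m / 2^k = real m' / 2^k' \<and> p = dyadic_point x y k' m'"
    using assms(2) by blast
  from someI_ex[OF this] obtain k' m' where km: "m' \<le> (2::nat)^k'" "real m / 2^k = real m' / 2^k'"
    and p: "dyadic_path x y (real m / 2^k) = dyadic_point x y k' m'"
    unfolding dyadic_path_def by blast
  have "dist (dyadic_point x y k' m') (dyadic_point x y k m) \<le> 0"
    using dyadic_point_dist[OF H km(1) assms(2), of x y] km(2) by simp
  then show ?thesis using p by simp
qed

text \<open>A path of Lipschitz constant \<open>d(x,y)\<close> from \<open>x\<close> to \<open>y\<close> cannot shortcut any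
  sub-interval without violating the triangle inequality along \<open>[0,1]\<close>.\<close>

lemma lipschitz_path_geodesic:
  assumes L: "(dist x y)-lipschitz_on {0..1} g" and g0: "g 0 = x" and g1: "g 1 = y"
  shows "geodesic_between g x y"
proof -
  have lip: "dist (g s) (g t) \<le> dist x y * \<bar>s - t\<bar>" if "s \<in> {0..1}" "t \<in> {0..1}" for s t
    using lipschitz_onD[OF L that] by (simp add: dist_real_def)
  have eq: "dist (g s) (g t) = \<bar>s - t\<bar> * dist x y" if st: "s \<in> {0..1}" "t \<in> {0..1}" "s \<le> t" for s t
  proof -
    have "dist x y \<le> dist (g 0) (g s) + dist (g s) (g t) + dist (g t) (g 1)"
      using dist_triangle[of "g 0" "g 1" "g s"] dist_triangle[of "g s" "g 1" "g t"] g0 g1 by simp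
    moreover have "dist (g 0) (g s) \<le> dist x y * s" "dist (g t) (g 1) \<le> dist x y * (1 - t)"
      using lip[of 0 s] lip[of t 1] st by simp_all
    ultimately have "dist x y * (t - s) \<le> dist (g s) (g t)" by (simp add: algebra_simps)
    then show ?thesis using lip[OF st(1,2)] st(3) by (simp add: mult.commute)
  qed
  show ?thesis
    unfolding geodesic_between_def
    using eq g0 g1 by (metis abs_minus_commute dist_commute linear)
qed

lemma has_midpoints_geodesic:
  fixes x y :: "'a::complete_space"
  assumes H: "has_midpoints TYPE('a)"
  obtains g where "geodesic_between g x y"
proof -
  have "(dist x y)-lipschitz_on dyadics01 (dyadic_path x y)"
  proof (rule lipschitz_onI)
    fix s t assume "s \<in> dyadics01" "t \<in> dyadics01"
    then obtain k m k' m' where "m \<le> (2::nat)^k" "s = real m / 2^k" "m' \<le> (2::nat)^k'" "t = real m' / 2^k'"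
      unfolding dyadics01_def by blast
    then show "dist (dyadic_path x y s) (dyadic_path x y t) \<le> dist x y * dist s t"
      using dyadic_point_dist[OF H, of m k m' k' x y] dyadic_path_eq[OF H]
      by (simp add: dist_real_def mult.commute)
  qed simp
  then obtain g where L: "(dist x y)-lipschitz_on {0..1} g" and g: "\<And>t. t \<in> dyadics01 \<Longrightarrow> g t = dyadic_path x y t"
    using lipschitz_extend_closure closure_dyadics01 by metis
  have "real m / 2^k \<in> dyadics01" if "m \<le> 2^k" for m k using that unfolding dyadics01_def by blast
  from this[of 0 0] this[of 1 0] have "0 \<in> dyadics01" "1 \<in> dyadics01" by simp_all
  then have "g 0 = x" "g 1 = y"
    using g dyadic_path_eq[OF H, of 0 0 x y] dyadic_path_eq[OF H, of 1 0 x y] by simp_all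
  then show thesis using that lipschitz_path_geodesic[OF L] by blast
qed

lemma geodesically_convex_path_connected:
  fixes C :: "'a::metric_space set"
  assumes "\<And>x y::'a. \<exists>g. geodesic_between g x y" and "geodesically_convex C"
  shows "path_connected C"
  unfolding path_connected_def
proof (intro ballI)
  fix x y assume "x \<in> C" "y \<in> C"
  obtain g where g: "geodesic_between g x y" using assms(1)[of x y] by blast
  have "(dist x y)-lipschitz_on {0..1} g"
    using g unfolding geodesic_between_def by (intro lipschitz_onI) (auto simp: dist_real_def mult.commute)
  then have "path g" unfolding path_def by (rule lipschitz_on_continuous_on)
  moreover have "path_image g \<subseteq> C"
    using assms(2) \<open>x \<in> C\<close> \<open>y \<in> C\<close> g unfolding geodesically_convex_def path_image_def by blast
  ultimately show "\<exists>g. path g \<and> path_image g \<subseteq> C \<and> pathstart g = x \<and> pathfinish g = y"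
    using g unfolding geodesic_between_def pathstart_def pathfinish_def by blast
qed

lemma hadamard_space_geodesically_convex_connected:
  fixes C :: "'a::complete_space set"
  assumes "hadamard_space TYPE('a)" and "geodesically_convex C"
  shows "connected C"
proof -
  have "\<exists>g. geodesic_between g x y" for x y :: 'a
    using has_midpoints_geodesic[OF hadamard_space_has_midpoints[OF assms(1)]] by metis
  then show ?thesis by (intro path_connected_imp_connected geodesically_convex_path_connected assms(2))
qed

lemma connected_equidistant_point:
  fixes a b :: "'a::metric_space"
  assumes "connected C" "y1 \<in> C" "y2 \<in> C" "dist y1 a \<le> dist y1 b" "dist y2 b \<le> dist y2 a"
  obtains z where "z \<in> C" "dist z a = dist z b"
proof -
  define \<phi> where "\<phi> z = dist z b - dist z a" for z
  have "connected (\<phi> ` C)"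
    unfolding \<phi>_def by (intro connected_continuous_image assms(1) continuous_intros)
  moreover have "\<phi> y2 \<in> \<phi> ` C" "\<phi> y1 \<in> \<phi> ` C" "\<phi> y2 \<le> 0" "0 \<le> \<phi> y1"
    using assms(2-5) unfolding \<phi>_def by auto
  ultimately have "0 \<in> \<phi> ` C" by (rule connectedD_interval)
  then obtain z where "0 = \<phi> z" "z \<in> C" by (rule imageE)
  then show thesis by (intro that[of z]) (simp_all add: \<phi>_def)
qed

section \<open>Loss functions in \<open>S0plus\<close>\<close>

lemma borel_measurable_dist_point:
  assumes "Y \<in> borel_measurable M"
  shows "(\<lambda>\<omega>. dist (Y \<omega>) q) \<in> borel_measurable M"
  by (rule measurable_compose[OF assms borel_measurable_continuous_onI]) (intro continuous_intros)

context
  fixes \<tau> :: "real \<Rightarrow> real"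
  assumes \<tau>: "\<tau> \<in> S0plus"
begin

lemma S0plus_mono: "mono_on {0..} \<tau>"
  and S0plus_convex: "convex_on {0..} \<tau>"
  and S0plus_deriv_concave: "concave_on {0<..} (deriv \<tau>)"
  and S0plus_deriv_pos: "x > 0 \<Longrightarrow> deriv \<tau> x > 0"
  and S0plus_has_deriv: "x > 0 \<Longrightarrow> (\<tau> has_real_derivative deriv \<tau> x) (at x)"
  and S0plus_deriv_converges: "\<exists>l. (deriv \<tau> \<longlongrightarrow> l) (at_right 0)"
  using \<tau> unfolding S0plus_def by (auto simp: DERIV_deriv_iff_real_differentiable)

lemma S0plus_above_tangent:
  assumes "x > 0" "y \<ge> 0"
  shows "deriv \<tau> x * (y - x) \<le> \<tau> y - \<tau> x"
proof (rule convex_on_imp_above_tangent[OF S0plus_convex])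
  show "(\<tau> has_real_derivative deriv \<tau> x) (at x within {0..})"
    using S0plus_has_deriv[OF assms(1)] by (rule has_field_derivative_at_within)
qed (use assms in \<open>auto simp: is_interval_connected\<close>)

lemma S0plus_strict_mono:
  assumes "0 \<le> a" "a < b"
  shows "\<tau> a < \<tau> b"
proof -
  define c where "c = (a + b) / 2"
  have c: "0 < c" "a \<le> c" "c < b" using assms unfolding c_def by auto
  have "\<tau> a \<le> \<tau> c" using S0plus_mono c assms by (auto intro: mono_onD)
  also have "\<dots> < \<tau> b"
    using S0plus_above_tangent[of c b] S0plus_deriv_pos[of c] c by (smt (verit) mult_pos_pos)
  finally show ?thesis .
qed

lemma S0plus_midpoint_convex:
  assumes "0 \<le> a" "0 \<le> b"
  shows "\<tau> ((a + b) / 2) \<le> (\<tau> a + \<tau> b) / 2"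
  using convex_onD[OF S0plus_convex, of "1/2" a b] assms by (simp add: field_simps)

lemma S0plus_deriv_mono:
  assumes "0 < x" "x \<le> y"
  shows "deriv \<tau> x \<le> deriv \<tau> y"
proof (cases "x = y")
  case False
  have "deriv \<tau> x * (y - x) \<le> \<tau> y - \<tau> x" "deriv \<tau> y * (x - y) \<le> \<tau> x - \<tau> y"
    using S0plus_above_tangent assms by auto
  then have "deriv \<tau> x * (y - x) \<le> deriv \<tau> y * (y - x)" by (simp add: algebra_simps)
  then show ?thesis using assms False by simp
qed simp

lemma S0plus_deriv_tendsto: "(deriv \<tau> \<longlongrightarrow> tau_deriv \<tau> 0) (at_right 0)"
proof -
  obtain l where l: "(deriv \<tau> \<longlongrightarrow> l) (at_right 0)" using S0plus_deriv_converges by blast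
  moreover from l have "Lim (at_right 0) (deriv \<tau>) = l" by (intro tendsto_Lim) simp_all
  ultimately show ?thesis by (simp add: tau_deriv_def)
qed

lemma tau_deriv_nonneg: "0 \<le> tau_deriv \<tau> x"
proof (cases "x > 0")
  case False
  have "0 \<le> tau_deriv \<tau> 0"
  proof (rule tendsto_lowerbound[OF S0plus_deriv_tendsto])
    show "\<forall>\<^sub>F t in at_right 0. 0 \<le> deriv \<tau> t"
      using eventually_at_right_less[of 0] by eventually_elim (use S0plus_deriv_pos in force)
  qed simp
  with False show ?thesis by (simp add: tau_deriv_def)
qed (use S0plus_deriv_pos in \<open>simp add: tau_deriv_def less_imp_le\<close>)

lemma tau_deriv_mono: "mono (tau_deriv \<tau>)"
proof (rule monoI)
  fix x y :: real assume "x \<le> y"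
  have lim_le: "tau_deriv \<tau> 0 \<le> deriv \<tau> y" if "0 < y"
  proof (rule tendsto_upperbound[OF S0plus_deriv_tendsto])
    show "\<forall>\<^sub>F t in at_right 0. deriv \<tau> t \<le> deriv \<tau> y"
    proof (rule eventually_at_rightI[OF _ that])
      fix t :: real assume "t \<in> {0<..<y}"
      then show "deriv \<tau> t \<le> deriv \<tau> y" using S0plus_deriv_mono[of t y] by simp
    qed
  qed simp
  consider "y \<le> 0" | "0 < x" | "x \<le> 0" "0 < y" by linarith
  then show "tau_deriv \<tau> x \<le> tau_deriv \<tau> y"
  proof cases
    case 1
    with \<open>x \<le> y\<close> show ?thesis by (simp add: tau_deriv_def)
  next
    case 2
    with \<open>x \<le> y\<close> show ?thesis by (simp add: tau_deriv_def S0plus_deriv_mono)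
  next
    case 3
    with lim_le show ?thesis by (simp add: tau_deriv_def)
  qed
qed

text \<open>Concavity of \<open>\<tau>'\<close> between \<open>x/2\<close> and \<open>2x\<close> gives \<open>\<tau>'(x) \<ge> \<tau>'(2x)/3\<close>.\<close>

lemma tau_deriv_double: "tau_deriv \<tau> (2 * x) \<le> 3 * tau_deriv \<tau> x"
proof (cases "x > 0")
  case True
  have "(1 - 1/3) * deriv \<tau> (x/2) + (1/3) * deriv \<tau> (2*x) \<le> deriv \<tau> ((1 - 1/3) * (x/2) + (1/3) * (2*x))"
    using True concave_onD[OF S0plus_deriv_concave, of "1/3" "x/2" "2*x"] by simp
  moreover have "(1 - 1/3) * (x/2) + (1/3) * (2*x) = x" by simp
  ultimately show ?thesis
    using True S0plus_deriv_pos[of "x/2"] by (simp add: tau_deriv_def)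
next
  case False
  then show ?thesis using tau_deriv_nonneg[of 0] by (simp add: tau_deriv_def)
qed

lemma S0plus_diff_le:
  assumes "0 \<le> a" "0 \<le> b"
  shows "\<bar>\<tau> a - \<tau> b\<bar> \<le> \<bar>a - b\<bar> * tau_deriv \<tau> (max a b)"
proof -
  have *: "\<bar>\<tau> v - \<tau> u\<bar> \<le> (v - u) * tau_deriv \<tau> v" if "0 \<le> u" "u \<le> v" for u v
  proof (cases "u = v")
    case False
    with that have "0 < v" by simp
    have "\<tau> u \<le> \<tau> v" using that by (intro mono_onD[OF S0plus_mono]) simp_all
    moreover have "deriv \<tau> v * (u - v) \<le> \<tau> u - \<tau> v" using S0plus_above_tangent \<open>0 < v\<close> that(1) .
    ultimately show ?thesis using \<open>0 < v\<close> by (simp add: tau_deriv_def algebra_simps)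
  qed simp
  show ?thesis
  proof (cases "b \<le> a")
    case True
    then show ?thesis using *[of b a] assms by (simp add: max_def)
  next
    case False
    then have "\<bar>\<tau> a - \<tau> b\<bar> = \<bar>\<tau> b - \<tau> a\<bar>" "\<bar>a - b\<bar> = b - a" "max a b = b"
      by (simp_all add: abs_minus_commute)
    then show ?thesis using *[of a b] assms False by simp
  qed
qed

lemma S0plus_diff_bound:
  assumes "0 \<le> a" "0 \<le> b" "\<bar>a - b\<bar> \<le> c"
  shows "\<bar>\<tau> a - \<tau> b\<bar> \<le> 3 * c * (tau_deriv \<tau> b + tau_deriv \<tau> c)"
proof -
  have "tau_deriv \<tau> (max a b) \<le> tau_deriv \<tau> (2 * max b c)"
    using assms by (intro monoD[OF tau_deriv_mono]) auto
  also have "\<dots> \<le> 3 * tau_deriv \<tau> (max b c)" by (rule tau_deriv_double)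
  also have "\<dots> \<le> 3 * (tau_deriv \<tau> b + tau_deriv \<tau> c)"
    using tau_deriv_nonneg[of b] tau_deriv_nonneg[of c] by (simp add: max_def)
  finally have deriv_le: "tau_deriv \<tau> (max a b) \<le> 3 * (tau_deriv \<tau> b + tau_deriv \<tau> c)" .
  have "\<bar>\<tau> a - \<tau> b\<bar> \<le> \<bar>a - b\<bar> * tau_deriv \<tau> (max a b)" by (rule S0plus_diff_le[OF assms(1,2)])
  also have "\<dots> \<le> c * (3 * (tau_deriv \<tau> b + tau_deriv \<tau> c))"
    using assms(3) deriv_le tau_deriv_nonneg[of "max a b"] by (intro mult_mono; arith)
  finally show ?thesis by (simp add: mult_ac)
qed

lemma borel_measurable_S0plus_dist:
  assumes "Y \<in> borel_measurable M"
  shows "(\<lambda>\<omega>. \<tau> (dist (Y \<omega>) q)) \<in> borel_measurable M"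
proof -
  have "mono (\<lambda>z. \<tau> (max 0 z))"
    by (intro monoI mono_onD[OF S0plus_mono]) auto
  then have "(\<lambda>\<omega>. \<tau> (max 0 (dist (Y \<omega>) q))) \<in> borel_measurable M"
    by (rule measurable_compose[OF borel_measurable_dist_point[OF assms] borel_measurable_mono])
  then show ?thesis by simp
qed

end

section \<open>Support of a random variable\<close>

lemma rv_support_subset:
  assumes "prob_space M" "Y \<in> borel_measurable M" "closed C" "AE \<omega> in M. Y \<omega> \<in> C"
  shows "rv_support M Y \<subseteq> C"
proof -
  interpret prob_space M by fact
  have "Measurable.pred M (\<lambda>\<omega>. Y \<omega> \<in> C)" using assms(2,3) by (intro pred_sets2) auto
  then have "emeasure M {\<omega> \<in> space M. Y \<omega> \<in> C} = 1" using assms(4) AE_iff_emeasure_eq_1 by blast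
  then have "measure M {\<omega> \<in> space M. Y \<omega> \<in> C} = 1" by (simp add: emeasure_eq_measure)
  with assms(3) show ?thesis unfolding rv_support_def by blast
qed

lemma not_in_rv_support_null_ball:
  assumes "prob_space M" "closure D = UNIV" "y \<notin> rv_support M Y"
  shows "\<exists>d\<in>D. \<exists>n. y \<in> ball d (1 / Suc n) \<and> (AE \<omega> in M. Y \<omega> \<notin> ball d (1 / Suc n))"
proof -
  interpret prob_space M by fact
  obtain C where C: "closed C" "prob {\<omega> \<in> space M. Y \<omega> \<in> C} = 1" "y \<notin> C"
    using assms(3) unfolding rv_support_def by blast
  have "AE \<omega> in M. Y \<omega> \<in> C" using AE_prob_1[OF C(2)] by eventually_elim simp
  obtain r where r: "r > 0" "ball y r \<subseteq> - C" using C(1,3) open_contains_ball[of "- C"] by auto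
  obtain n where n: "inverse (real (Suc n)) < r / 2" using r(1) by (metis half_gt_zero reals_Archimedean)
  obtain d where d: "d \<in> D" "dist d y < 1 / real (Suc n)"
    using assms(2) closure_approachable[of y D] by (metis UNIV_I of_nat_0_less_iff zero_less_Suc zero_less_divide_1_iff)
  have "ball d (1 / real (Suc n)) \<subseteq> ball y r"
  proof
    fix z assume "z \<in> ball d (1 / real (Suc n))"
    then have "dist y z < 2 / real (Suc n)" using d dist_triangle3[of y z d] by (simp add: dist_commute)
    also have "\<dots> < r" using n by (simp add: field_simps)
    finally show "z \<in> ball y r" by simp
  qed
  with r(2) \<open>AE \<omega> in M. Y \<omega> \<in> C\<close> have "AE \<omega> in M. Y \<omega> \<notin> ball d (1 / Suc n)"
    by (auto elim!: eventually_mono)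
  with d show ?thesis by (auto simp: dist_commute)
qed

lemma rv_support_AE:
  fixes Y :: "'b \<Rightarrow> 'a::metric_space"
  assumes "prob_space M" "separable_space TYPE('a)"
  shows "AE \<omega> in M. Y \<omega> \<in> rv_support M Y"
proof -
  obtain D :: "'a set" where D: "countable D" "closure D = UNIV"
    using assms(2) unfolding separable_space_def by blast
  define I where "I = {(d, n). d \<in> D \<and> (AE \<omega> in M. Y \<omega> \<notin> ball d (1 / Suc n))}"
  have "countable I" by (rule countable_subset[of _ "D \<times> UNIV"]) (auto simp: I_def D(1))
  then have "AE \<omega> in M. \<forall>(d, n)\<in>I. Y \<omega> \<notin> ball d (1 / Suc n)"
    by (intro AE_ball_countable') (auto simp: I_def)
  then show ?thesis
    by eventually_elim (use not_in_rv_support_null_ball[OF assms(1) D(2)] in \<open>fastforce simp: I_def\<close>)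
qed

section \<open>The \<open>\<tau>\<close>-Frechet objective\<close>

lemma (in prob_space) integral_pos_AE:
  fixes f :: "'a \<Rightarrow> real"
  assumes "integrable M f" "AE x in M. 0 < f x"
  shows "0 < integral\<^sup>L M f"
proof -
  have nonneg: "AE x in M. 0 \<le> f x" using assms(2) by eventually_elim simp
  have "integral\<^sup>L M f \<noteq> 0"
  proof
    assume "integral\<^sup>L M f = 0"
    then have "AE x in M. f x = 0" using integral_nonneg_eq_0_iff_AE[OF assms(1) nonneg] by simp
    with assms(2) have "AE x in M. False" by eventually_elim simp
    then show False by simp
  qed
  with integral_nonneg_AE[OF nonneg] show ?thesis by simp
qed

locale tau_frechet = prob_space M
  for M :: "'b measure" and Y :: "'b \<Rightarrow> 'a::metric_space" and \<tau> :: "real \<Rightarrow> real" and o' :: 'a +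
  assumes Y_measurable: "Y \<in> borel_measurable M"
    and \<tau>_S0plus: "\<tau> \<in> S0plus"
    and tau_deriv_integrable: "(\<integral>\<^sup>+\<omega>. ennreal (tau_deriv \<tau> (dist (Y \<omega>) o')) \<partial>M) < \<infinity>"
begin

definition frechet_loss :: "'a \<Rightarrow> 'b \<Rightarrow> real" where
  "frechet_loss q \<omega> = \<tau> (dist (Y \<omega>) q) - \<tau> (dist (Y \<omega>) o')"

lemma frechet_obj_eq: "frechet_obj M Y \<tau> o' q = integral\<^sup>L M (frechet_loss q)"
  by (simp add: frechet_obj_def frechet_loss_def[abs_def])

text \<open>The loss is dominated by \<open>3 d(q,o) (\<tau>'(d(Y,o)) + \<tau>'(d(q,o)))\<close>.\<close>

lemma integrable_frechet_loss: "integrable M (frechet_loss q)"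
proof -
  let ?c = "dist q o'"
  have "integrable M (\<lambda>\<omega>. tau_deriv \<tau> (dist (Y \<omega>) o'))"
  proof (rule integrableI_bounded)
    show "(\<lambda>\<omega>. tau_deriv \<tau> (dist (Y \<omega>) o')) \<in> borel_measurable M"
      by (rule measurable_compose[OF borel_measurable_dist_point[OF Y_measurable]
          borel_measurable_mono[OF tau_deriv_mono[OF \<tau>_S0plus]]])
    show "(\<integral>\<^sup>+\<omega>. ennreal (norm (tau_deriv \<tau> (dist (Y \<omega>) o'))) \<partial>M) < \<infinity>"
      using tau_deriv_integrable tau_deriv_nonneg[OF \<tau>_S0plus] by simp
  qed
  then have "integrable M (\<lambda>\<omega>. 3 * ?c * (tau_deriv \<tau> (dist (Y \<omega>) o') + tau_deriv \<tau> ?c))" by simp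
  moreover have "frechet_loss q \<in> borel_measurable M"
    unfolding frechet_loss_def
    by (intro borel_measurable_diff borel_measurable_S0plus_dist[OF \<tau>_S0plus Y_measurable])
  moreover have "norm (frechet_loss q \<omega>) \<le> norm (3 * ?c * (tau_deriv \<tau> (dist (Y \<omega>) o') + tau_deriv \<tau> ?c))" for \<omega>
  proof -
    have "\<bar>dist (Y \<omega>) q - dist (Y \<omega>) o'\<bar> \<le> ?c"
      using dist_triangle[of "Y \<omega>" q o'] dist_triangle[of "Y \<omega>" o' q] by (simp add: dist_commute abs_le_iff)
    then show ?thesis
      using S0plus_diff_bound[OF \<tau>_S0plus zero_le_dist zero_le_dist] tau_deriv_nonneg[OF \<tau>_S0plus]
      unfolding frechet_loss_def by simp
  qed
  ultimately show ?thesis by (intro Bochner_Integration.integrable_bound[of M _ "frechet_loss q"] AE_I2)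
qed

lemma frechet_obj_less:
  assumes "AE \<omega> in M. dist (Y \<omega>) p < dist (Y \<omega>) q"
  shows "frechet_obj M Y \<tau> o' p < frechet_obj M Y \<tau> o' q"
proof -
  have "AE \<omega> in M. 0 < frechet_loss q \<omega> - frechet_loss p \<omega>"
    using assms by eventually_elim (simp add: frechet_loss_def S0plus_strict_mono[OF \<tau>_S0plus])
  then have "0 < integral\<^sup>L M (\<lambda>\<omega>. frechet_loss q \<omega> - frechet_loss p \<omega>)"
    by (intro integral_pos_AE) (simp add: integrable_frechet_loss)
  then show ?thesis by (simp add: frechet_obj_eq integrable_frechet_loss)
qed

text \<open>The midpoint \<open>m\<close> of two means is at least as good as their average, strictly
  unless \<open>Y\<close> is almost surely in the closed region where the triangle inequality for
  \<open>Y, m\<^sub>1, m\<^sub>2\<close> is an equality.\<close>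

lemma tau_frechet_means_AE_gap:
  assumes "hadamard_space TYPE('a)"
    and m1: "is_tau_frechet_mean M Y \<tau> o' m1" and m2: "is_tau_frechet_mean M Y \<tau> o' m2"
  shows "AE \<omega> in M. dist m1 m2 \<le> \<bar>dist (Y \<omega>) m1 - dist (Y \<omega>) m2\<bar>"
proof -
  obtain m where le: "\<And>y. dist y m \<le> (dist y m1 + dist y m2) / 2"
    and less: "\<And>y. \<bar>dist y m1 - dist y m2\<bar> < dist m1 m2 \<Longrightarrow> dist y m < (dist y m1 + dist y m2) / 2"
    using hadamard_space_midpoint[OF assms(1)] by metis
  define W where "W \<omega> = (frechet_loss m1 \<omega> + frechet_loss m2 \<omega>) / 2 - frechet_loss m \<omega>" for \<omega>
  have W_tau: "W \<omega> = (\<tau> (dist (Y \<omega>) m1) + \<tau> (dist (Y \<omega>) m2)) / 2 - \<tau> (dist (Y \<omega>) m)" for \<omega>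
    unfolding W_def frechet_loss_def by (simp add: field_simps)
  have avg: "\<tau> ((dist (Y \<omega>) m1 + dist (Y \<omega>) m2) / 2) \<le> (\<tau> (dist (Y \<omega>) m1) + \<tau> (dist (Y \<omega>) m2)) / 2" for \<omega>
    by (intro S0plus_midpoint_convex[OF \<tau>_S0plus]) simp_all
  have W_nonneg: "0 \<le> W \<omega>" for \<omega>
  proof -
    have "\<tau> (dist (Y \<omega>) m) \<le> \<tau> ((dist (Y \<omega>) m1 + dist (Y \<omega>) m2) / 2)"
      using le[of "Y \<omega>"] by (intro mono_onD[OF S0plus_mono[OF \<tau>_S0plus]]) simp_all
    with avg[of \<omega>] show ?thesis unfolding W_tau by linarith
  qed
  have W_pos: "0 < W \<omega>" if "\<bar>dist (Y \<omega>) m1 - dist (Y \<omega>) m2\<bar> < dist m1 m2" for \<omega>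
    using avg[of \<omega>] S0plus_strict_mono[OF \<tau>_S0plus zero_le_dist less[OF that]]
    unfolding W_tau by linarith
  have "integral\<^sup>L M W = (frechet_obj M Y \<tau> o' m1 + frechet_obj M Y \<tau> o' m2) / 2 - frechet_obj M Y \<tau> o' m"
    unfolding W_def frechet_obj_eq by (simp add: integrable_frechet_loss)
  also have "\<dots> \<le> 0"
    using m1[unfolded is_tau_frechet_mean_def, THEN spec, of m] m2[unfolded is_tau_frechet_mean_def, THEN spec, of m]
    by (simp add: field_simps)
  moreover have W_AE_nonneg: "AE \<omega> in M. 0 \<le> W \<omega>" by (simp add: W_nonneg)
  ultimately have "integral\<^sup>L M W = 0" using integral_nonneg_AE[of W M] by linarith
  moreover have "integrable M W" unfolding W_def by (simp add: integrable_frechet_loss)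
  ultimately have "AE \<omega> in M. W \<omega> = 0" using integral_nonneg_eq_0_iff_AE W_AE_nonneg by blast
  then show ?thesis by eventually_elim (use W_pos in \<open>metis less_irrefl not_le\<close>)
qed

lemma tau_frechet_means_support_gap:
  assumes "hadamard_space TYPE('a)"
    and "is_tau_frechet_mean M Y \<tau> o' m1" and "is_tau_frechet_mean M Y \<tau> o' m2"
  shows "rv_support M Y \<subseteq> {y. dist m1 m2 \<le> \<bar>dist y m1 - dist y m2\<bar>}"
proof (rule rv_support_subset[OF prob_space_axioms Y_measurable])
  show "closed {y. dist m1 m2 \<le> \<bar>dist y m1 - dist y m2\<bar>}"
    by (intro closed_Collect_le continuous_intros)
  show "AE \<omega> in M. Y \<omega> \<in> {y. dist m1 m2 \<le> \<bar>dist y m1 - dist y m2\<bar>}"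
    using tau_frechet_means_AE_gap[OF assms] by simp
qed

lemma tau_frechet_mean_support_closer:
  assumes "separable_space TYPE('a)" and "is_tau_frechet_mean M Y \<tau> o' m1"
    and "rv_support M Y \<subseteq> {y. dist y m1 \<noteq> dist y m2}"
  shows "\<exists>y\<in>rv_support M Y. dist y m1 < dist y m2"
proof (rule ccontr)
  assume "\<not> ?thesis"
  with assms(3) have closer: "rv_support M Y \<subseteq> {y. dist y m2 < dist y m1}" by force
  have "AE \<omega> in M. Y \<omega> \<in> rv_support M Y" by (rule rv_support_AE[OF prob_space_axioms assms(1)])
  then have "AE \<omega> in M. dist (Y \<omega>) m2 < dist (Y \<omega>) m1" by eventually_elim (use closer in blast)
  then have "frechet_obj M Y \<tau> o' m2 < frechet_obj M Y \<tau> o' m1" by (rule frechet_obj_less)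
  with assms(2) show False unfolding is_tau_frechet_mean_def by (meson not_le)
qed

end

theorem mainTheorem12:
  fixes M :: "'b measure" and Y :: "'b \<Rightarrow> 'a::complete_space"
    and o' :: 'a and \<tau> :: "real \<Rightarrow> real"
  assumes "hadamard_space TYPE('a)"
    and "separable_space TYPE('a)"
    and "prob_space M"
    and "Y \<in> borel_measurable M"
    and "\<tau> \<in> S0plus"
    and "(\<integral>\<^sup>+\<omega>. ennreal (tau_deriv \<tau> (dist (Y \<omega>) o')) \<partial>M) < \<infinity>"
    and "geodesically_convex (rv_support M Y)"
  shows "\<forall>m1 m2. is_tau_frechet_mean M Y \<tau> o' m1 \<and> is_tau_frechet_mean M Y \<tau> o' m2
           \<longrightarrow> m1 = m2"
proof (intro allI impI, elim conjE, rule ccontr)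
  fix m1 m2
  assume m1: "is_tau_frechet_mean M Y \<tau> o' m1" and m2: "is_tau_frechet_mean M Y \<tau> o' m2"
    and "m1 \<noteq> m2"
  interpret tau_frechet M Y \<tau> o' by (intro tau_frechet.intro tau_frechet_axioms.intro assms(3-6))
  from tau_frechet_means_support_gap[OF assms(1) m1 m2] \<open>m1 \<noteq> m2\<close>
  have gap: "rv_support M Y \<subseteq> {y. dist y m1 \<noteq> dist y m2}" by force
  obtain y1 where y1: "y1 \<in> rv_support M Y" "dist y1 m1 < dist y1 m2"
    using tau_frechet_mean_support_closer[OF assms(2) m1 gap] by blast
  have "rv_support M Y \<subseteq> {y. dist y m2 \<noteq> dist y m1}" using gap by auto
  then obtain y2 where y2: "y2 \<in> rv_support M Y" "dist y2 m2 < dist y2 m1"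
    using tau_frechet_mean_support_closer[OF assms(2) m2] by blast
  obtain z where "z \<in> rv_support M Y" "dist z m1 = dist z m2"
    by (rule connected_equidistant_point[OF hadamard_space_geodesically_convex_connected[OF assms(1,7)]
          y1(1) y2(1) less_imp_le[OF y1(2)] less_imp_le[OF y2(2)]])
  with gap show False by blast
qed

end
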